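(* Let $\Bbbk$ be a field of characteristic zero, let $V$ be a finite-dimensional $\Bbbk$-vector space, let $m\ge 2$, and for each $\ell=2,\dots,m$ let $\Psi_\ell:V^{\ell}\to V$ be a symmetric $\Bbbk$-multilinear map. Consider the polynomial map $F:V\to V$, $F(x)=x-\sum_{\ell=2}^m\Psi_\ell(x,\dots,x)$, and the algebra $A=(V,\{\Psi_\ell\}_{\ell=2}^m)$. Then $F$ is invertible (i.e. is a polynomial automorphism of $V$) if and only if $A$ is a Yagzhev algebra of some order $q_0$, i.e. if and only if there is $q_0$ such that for every $q\ge q_0$ and every $a\in A$ one has $\sum_{|t|=q}t(a)=0$.
   Context: Terms are formal expressions defined inductively: the symbol $x$ is a term with $|x|=1$; if $t_1,\dots,t_\ell$ are terms and $2\le \ell\le m$, then $\Psi_\ell(t_1,\dots,t_\ell)$ is a term with $|\Psi_\ell(t_1,\dots,t_\ell)|=|t_1|+\dots+|t_\ell|$. Different formal expressions are different terms even if they define the same element (e.g. $\Psi_2(x,\Psi_3(x,x,x))$ and $\Psi_2(\Psi_3(x,x,x),x)$ are distinct terms); $|t|$ is the number of occurrences of $x$ in $t$. For $a\in A$, $t(a)$ denotes the element obtained by substituting $a$ for $x$ and evaluating. The sum $\sum_{|t|=q}$ runs over all (finitely many) terms $t$ with $|t|=q$. The algebra $A$ is called a Yagzhev algebra of order $q_0$ if $\sum_{|t|=q}t(a)=0$ for all $a\in A$ and all $q\ge q_0$. *)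

theory Defs
  imports Main "HOL.Vector_Spaces" "HOL-Library.Multiset"
begin

text \<open>Formal terms: X is the variable x; Op [t1,...,tl] is Psi_l(t1,...,tl).\<close>
datatype yterm = X | Op "yterm list"

fun wf_term :: "nat \<Rightarrow> yterm \<Rightarrow> bool" where
  "wf_term m X = True"
| "wf_term m (Op ts) = (2 \<le> length ts \<and> length ts \<le> m \<and> (\<forall>t\<in>set ts. wf_term m t))"

fun tsize :: "yterm \<Rightarrow> nat" where
  "tsize X = 1"
| "tsize (Op ts) = sum_list (map tsize ts)"

fun teval :: "(nat \<Rightarrow> 'v list \<Rightarrow> 'v) \<Rightarrow> yterm \<Rightarrow> 'v \<Rightarrow> 'v" where
  "teval Psi X a = a"
| "teval Psi (Op ts) a = Psi (length ts) (map (\<lambda>t. teval Psi t a) ts)"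

definition terms_of_size :: "nat \<Rightarrow> nat \<Rightarrow> yterm set" where
  "terms_of_size m q = {t. wf_term m t \<and> tsize t = q}"

definition multilinear :: "('k \<Rightarrow> 'v \<Rightarrow> 'v) \<Rightarrow> nat \<Rightarrow> ('v::ab_group_add list \<Rightarrow> 'v) \<Rightarrow> bool" where
  "multilinear scale n f \<longleftrightarrow>
     (\<forall>xs i a b. length xs = n \<and> i < n \<longrightarrow> f (xs[i := a + b]) = f (xs[i := a]) + f (xs[i := b])) \<and>
     (\<forall>xs i c a. length xs = n \<and> i < n \<longrightarrow> f (xs[i := scale c a]) = scale c (f (xs[i := a])))"

definition symmetric_map :: "nat \<Rightarrow> ('v list \<Rightarrow> 'w) \<Rightarrow> bool" where
  "symmetric_map n f \<longleftrightarrow> (\<forall>xs ys. length xs = n \<and> mset ys = mset xs \<longrightarrow> f ys = f xs)"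

text \<open>Polynomial maps V -> V: finite sums of homogeneous components Phi_l(x,...,x)
  with Phi_l multilinear (Phi_0 a constant).\<close>
definition poly_map :: "('k \<Rightarrow> 'v \<Rightarrow> 'v) \<Rightarrow> ('v::ab_group_add \<Rightarrow> 'v) \<Rightarrow> bool" where
  "poly_map scale G \<longleftrightarrow> (\<exists>d Phi. (\<forall>l\<le>d. multilinear scale l (Phi l)) \<and>
       G = (\<lambda>x. \<Sum>l\<le>d. Phi l (replicate l x)))"

definition poly_automorphism :: "('k \<Rightarrow> 'v \<Rightarrow> 'v) \<Rightarrow> ('v::ab_group_add \<Rightarrow> 'v) \<Rightarrow> bool" where
  "poly_automorphism scale F \<longleftrightarrow> poly_map scale F \<and>
     (\<exists>G. poly_map scale G \<and> (\<forall>x. G (F x) = x) \<and> (\<forall>x. F (G x) = x))"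

definition yagzhev_of_order :: "nat \<Rightarrow> (nat \<Rightarrow> 'v::comm_monoid_add list \<Rightarrow> 'v) \<Rightarrow> nat \<Rightarrow> bool" where
  "yagzhev_of_order m Psi q0 \<longleftrightarrow>
     (\<forall>q\<ge>q0. \<forall>a. (\<Sum>t\<in>terms_of_size m q. teval Psi t a) = 0)"

end

theory Submission
  imports Defs "HOL-Computational_Algebra.Polynomial"
begin

text \<open>Write \<open>F = id - P\<close> with \<open>P y = \<Sum>l. \<Psi>\<^sub>l(y, \<dots>, y)\<close> and
  \<open>S\<^sub>q a = \<Sum>\<^bsub>|t| = q\<^esub> t(a)\<close>. The Picard iterates \<open>x\<^sub>0 = a\<close>,
  \<open>x\<^sub>k\<^sub>+\<^sub>1 = a + P x\<^sub>k\<close> are the sums of \<open>t(a)\<close> over the terms of depth at most \<open>k\<close>.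
  Restricted to a ray \<open>x \<mapsto> x a\<close> they are polynomial curves, \<open>x\<^sub>k\<close> agrees with
  \<open>\<Sum>\<^bsub>q \<le> k+1\<^esub> x\<^sup>q S\<^sub>q a\<close> to order \<open>k + 2\<close> in \<open>x\<close>, and \<open>F x\<^sub>k\<^sub>+\<^sub>1 = x a\<close> to order \<open>k + 3\<close>.

  If \<open>F\<close> has a polynomial inverse \<open>G\<close> of degree \<open>d\<close>, then \<open>G(x a) = G(F x\<^sub>k\<^sub>+\<^sub>1) + O(x\<^sup>k\<^sup>+\<^sup>3)\<close>
  has the same coefficients as \<open>\<Sum>\<^sub>q x\<^sup>q S\<^sub>q a\<close> up to degree \<open>k + 2\<close>; hence \<open>S\<^sub>q = 0\<close> for \<open>q > d\<close>.
  Conversely, if \<open>S\<^sub>q = 0\<close> for \<open>q \<ge> q\<^sub>0\<close>, the same estimates show that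
  \<open>F(G(x a)) - x a\<close> vanishes to every order for \<open>G = \<Sum>\<^bsub>q \<le> q\<^sub>0\<^esub> S\<^sub>q\<close>, so \<open>G\<close> is a right
  inverse; it is also a left inverse because \<open>P\<close> has no linear part, so \<open>F u = F v\<close> for curves
  \<open>u, v\<close> through \<open>0\<close> forces \<open>u - v\<close> to vanish to every order. A polynomial curve vanishing to
  every order is zero because the field is infinite.\<close>

section \<open>Multilinear maps\<close>

lemma multilinear_add_slot:
  assumes "multilinear scale n f" "length xs + length ys + 1 = n"
  shows "f (xs @ (a + b) # ys) = f (xs @ a # ys) + f (xs @ b # ys)"
proof -
  have "f ((xs @ c # ys)[length xs := a + b]) =
      f ((xs @ c # ys)[length xs := a]) + f ((xs @ c # ys)[length xs := b])" for c
    using assms unfolding multilinear_def by (metis length_append length_Cons add_Suc_right Suc_eq_plus1 less_add_Suc1)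
  then show ?thesis by simp
qed

lemma multilinear_scale_slot:
  assumes "multilinear scale n f" "length xs + length ys + 1 = n"
  shows "f (xs @ scale c a # ys) = scale c (f (xs @ a # ys))"
proof -
  have "f ((xs @ d # ys)[length xs := scale c a]) = scale c (f ((xs @ d # ys)[length xs := a]))" for d
    using assms unfolding multilinear_def by (metis length_append length_Cons add_Suc_right Suc_eq_plus1 less_add_Suc1)
  then show ?thesis by simp
qed

lemma multilinearI:
  fixes f :: "'v::ab_group_add list \<Rightarrow> 'v"
  assumes "\<And>xs ys a b. length xs + length ys + 1 = n \<Longrightarrow>
      f (xs @ (a + b) # ys) = f (xs @ a # ys) + f (xs @ b # ys)"
    and "\<And>xs ys c a. length xs + length ys + 1 = n \<Longrightarrow>
      f (xs @ scale c a # ys) = scale c (f (xs @ a # ys))"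
  shows "multilinear scale n f"
  unfolding multilinear_def
proof (intro conjI allI impI)
  fix zs :: "'v list" and i a b assume h: "length zs = n \<and> i < n"
  have l: "length (take i zs) + length (drop (Suc i) zs) + 1 = n" using h by auto
  show "f (zs[i := a + b]) = f (zs[i := a]) + f (zs[i := b])"
    using h assms(1)[OF l] by (simp add: upd_conv_take_nth_drop)
next
  fix zs :: "'v list" and i c a assume h: "length zs = n \<and> i < n"
  have l: "length (take i zs) + length (drop (Suc i) zs) + 1 = n" using h by auto
  show "f (zs[i := scale c a]) = scale c (f (zs[i := a]))"
    using h assms(2)[OF l] by (simp add: upd_conv_take_nth_drop)
qed

lemma multilinear_hd: "multilinear scale 1 hd"
  by (rule multilinearI) auto

lemma Cons_slot_split:
  assumes "length xs + length ys + 1 = a + b"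
  obtains (left) ys1 ys2 where "ys = ys1 @ ys2" "length xs + length ys1 + 1 = a"
  | (right) xs1 xs2 where "xs = xs1 @ xs2" "length xs1 = a"
proof (cases "length xs < a")
  case True
  then show ?thesis
    using left[of "take (a - length xs - 1) ys" "drop (a - length xs - 1) ys"] assms by simp
next
  case False
  then show ?thesis using right[of "take a xs" "drop a xs"] by simp
qed

definition subst_slots :: "('v list \<Rightarrow> 'w) \<Rightarrow> nat \<Rightarrow> nat \<Rightarrow> ('v list \<Rightarrow> 'v) \<Rightarrow> 'v list \<Rightarrow> 'w" where
  "subst_slots f i n g zs = f (take i zs @ g (take n (drop i zs)) # drop (i + n) zs)"

lemma subst_slots_append:
  "length As = i \<Longrightarrow> length Bs = n \<Longrightarrow> subst_slots f i n g (As @ Bs @ Cs) = f (As @ g Bs # Cs)"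
  unfolding subst_slots_def by simp

lemma subst_slots_cases:
  assumes len: "length xs + length ys + 1 = i + n + r"
  obtains (outer) P Q where "length P + length Q + 1 = i + 1 + r"
      "\<And>c. subst_slots f i n g (xs @ c # ys) = f (P @ c # Q)"
  | (inner) P Q R S where "length P + length Q + 1 = i + 1 + r" "length R + length S + 1 = n"
      "\<And>c. subst_slots f i n g (xs @ c # ys) = f (P @ g (R @ c # S) # Q)"
proof -
  from len have "length xs + length ys + 1 = i + (n + r)" by simp
  then show ?thesis
  proof (cases rule: Cons_slot_split)
    case (left ys1 ys2)
    then have "subst_slots f i n g (xs @ c # ys) = f (xs @ c # ys1 @ g (take n ys2) # drop n ys2)" for c
      using subst_slots_append[of "xs @ c # ys1" i "take n ys2" n f g "drop n ys2"] len by simp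
    then show ?thesis using outer[of xs "ys1 @ g (take n ys2) # drop n ys2"] left len by simp
  next
    case (right xs1 xs2)
    note xs = right
    with len have "length xs2 + length ys + 1 = n + r" by simp
    then show ?thesis
    proof (cases rule: Cons_slot_split)
      case (left ys1 ys2)
      then have "subst_slots f i n g (xs @ c # ys) = f (xs1 @ g (xs2 @ c # ys1) # ys2)" for c
        using subst_slots_append[of xs1 i "xs2 @ c # ys1" n f g ys2] xs by simp
      then show ?thesis using inner[of xs1 ys2 xs2 ys1] left xs len by simp
    next
      case (right xs21 xs22)
      then have "subst_slots f i n g (xs @ c # ys) = f ((xs1 @ g xs21 # xs22) @ c # ys)" for c
        using subst_slots_append[of xs1 i xs21 n f g "xs22 @ c # ys"] xs by simp
      then show ?thesis using outer[of "xs1 @ g xs21 # xs22" ys] xs right len by simp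
    qed
  qed
qed

lemma multilinear_subst_slots:
  fixes g :: "'v::ab_group_add list \<Rightarrow> 'v"
  assumes f: "multilinear scale (i + 1 + r) f" and g: "multilinear scale n g"
  shows "multilinear scale (i + n + r) (subst_slots f i n g)"
proof (rule multilinearI)
  fix xs ys :: "'v list" and a b assume len: "length xs + length ys + 1 = i + n + r"
  then show "subst_slots f i n g (xs @ (a + b) # ys) =
      subst_slots f i n g (xs @ a # ys) + subst_slots f i n g (xs @ b # ys)"
  proof (cases rule: subst_slots_cases[where f = f and g = g])
    case (outer P Q) then show ?thesis using multilinear_add_slot[OF f] by simp
  next
    case (inner P Q R S) then show ?thesis using multilinear_add_slot[OF f] multilinear_add_slot[OF g] by simp
  qed
next
  fix xs ys :: "'v list" and c a assume len: "length xs + length ys + 1 = i + n + r"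
  then show "subst_slots f i n g (xs @ scale c a # ys) = scale c (subst_slots f i n g (xs @ a # ys))"
  proof (cases rule: subst_slots_cases[where f = f and g = g])
    case (outer P Q) then show ?thesis using multilinear_scale_slot[OF f] by simp
  next
    case (inner P Q R S) then show ?thesis using multilinear_scale_slot[OF f] multilinear_scale_slot[OF g] by simp
  qed
qed

lemma multilinear_compose_replicate:
  "multilinear scale (k + length ps) f \<Longrightarrow> (\<forall>(n, \<phi>) \<in> set ps. multilinear scale n \<phi>) \<Longrightarrow>
   \<exists>g. multilinear scale (k + sum_list (map fst ps)) g \<and>
     (\<forall>y. g (replicate (k + sum_list (map fst ps)) y) =
          f (replicate k y @ map (\<lambda>(n, \<phi>). \<phi> (replicate n y)) ps))"
proof (induction ps arbitrary: k f)
  case Nil then show ?case by auto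
next
  case (Cons np ps)
  obtain n \<phi> where np: "np = (n, \<phi>)" by fastforce
  have "multilinear scale (k + 1 + length ps) f" using Cons.prems by simp
  then have "multilinear scale (k + n + length ps) (subst_slots f k n \<phi>)"
    by (rule multilinear_subst_slots) (use Cons.prems np in simp)
  then obtain g where g: "multilinear scale (k + n + sum_list (map fst ps)) g"
    "\<forall>y. g (replicate (k + n + sum_list (map fst ps)) y) =
       subst_slots f k n \<phi> (replicate (k + n) y @ map (\<lambda>(n, \<phi>). \<phi> (replicate n y)) ps)"
    using Cons.IH[of "k + n" "subst_slots f k n \<phi>"] Cons.prems by auto
  have "g (replicate (k + sum_list (map fst (np # ps))) y) =
      f (replicate k y @ map (\<lambda>(n, \<phi>). \<phi> (replicate n y)) (np # ps))" for y
    using g(2) np by (simp add: replicate_add subst_slots_append add.assoc)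
  moreover have "multilinear scale (k + sum_list (map fst (np # ps))) g" using g(1) np by (simp add: add.assoc)
  ultimately show ?case by blast
qed

definition homogeneous_map :: "('k \<Rightarrow> 'v \<Rightarrow> 'v) \<Rightarrow> nat \<Rightarrow> ('v::ab_group_add \<Rightarrow> 'v) \<Rightarrow> bool" where
  "homogeneous_map scale n h \<longleftrightarrow> (\<exists>\<phi>. multilinear scale n \<phi> \<and> (\<forall>y. h y = \<phi> (replicate n y)))"

context vector_space
begin

lemma multilinear_zero_slot:
  assumes "multilinear scale n f" "length xs + length ys + 1 = n"
  shows "f (xs @ 0 # ys) = 0"
  using multilinear_scale_slot[OF assms, of 0 0] by simp

lemma multilinear_diff_slot:
  assumes "multilinear scale n f" "length xs + length ys + 1 = n"
  shows "f (xs @ (a - b) # ys) = f (xs @ a # ys) - f (xs @ b # ys)"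
  using multilinear_add_slot[OF assms, of "a - b" b] by (simp add: algebra_simps)

lemma multilinear_sum_slot:
  assumes "multilinear scale n f" "length xs + length ys + 1 = n"
  shows "f (xs @ (\<Sum>t\<in>D. g t) # ys) = (\<Sum>t\<in>D. f (xs @ g t # ys))"
  by (induction D rule: infinite_finite_induct)
    (simp_all add: multilinear_zero_slot[OF assms] multilinear_add_slot[OF assms])

lemma multilinear_replicate_0:
  assumes "multilinear scale n f" "n > 0"
  shows "f (replicate n 0) = 0"
  using multilinear_zero_slot[OF assms(1), of "[]" "replicate (n - 1) 0"] assms(2)
  by (cases n) simp_all

lemma multilinear_scale_slots:
  assumes f: "multilinear scale n f"
  shows "length xs + length ps = n \<Longrightarrow>
    f (xs @ map (\<lambda>(c, y). scale c y) ps) = scale (prod_list (map fst ps)) (f (xs @ map snd ps))"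
proof (induction ps arbitrary: xs)
  case Nil then show ?case by simp
next
  case (Cons cy ps)
  obtain c y where cy: "cy = (c, y)" by fastforce
  have "f (xs @ map (\<lambda>(c, y). scale c y) (cy # ps)) = f ((xs @ [scale c y]) @ map (\<lambda>(c, y). scale c y) ps)"
    by (simp add: cy)
  also have "\<dots> = scale (prod_list (map fst ps)) (f ((xs @ [scale c y]) @ map snd ps))"
    using Cons.IH[of "xs @ [scale c y]"] Cons.prems by simp
  also have "f ((xs @ [scale c y]) @ map snd ps) = scale c (f (xs @ y # map snd ps))"
    using multilinear_scale_slot[OF f, of xs "map snd ps" c y] Cons.prems by simp
  finally show ?case by (simp add: cy mult.commute)
qed

lemma multilinear_replicate_scale:
  assumes "multilinear scale l f"
  shows "f (replicate l (scale c a)) = scale (c ^ l) (f (replicate l a))"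
  using multilinear_scale_slots[OF assms, of "[]" "replicate l (c, a)"]
  by (simp add: prod_list_replicate)

lemma multilinear_replicate_sum:
  assumes f: "multilinear scale n f" and D: "finite D"
  shows "length xs + l = n \<Longrightarrow> f (xs @ replicate l (\<Sum>t\<in>D. g t)) =
    (\<Sum>ts \<in> {ts. set ts \<subseteq> D \<and> length ts = l}. f (xs @ map g ts))"
proof (induction l arbitrary: xs)
  case 0
  have "{ts. set ts \<subseteq> D \<and> length ts = 0} = {[]}" by auto
  then show ?case by simp
next
  case (Suc l)
  let ?L = "\<lambda>l. {ts. set ts \<subseteq> D \<and> length ts = l}"
  have len: "length xs + length (replicate l (\<Sum>t\<in>D. g t)) + 1 = n" using Suc.prems by simp
  have "f (xs @ replicate (Suc l) (\<Sum>t\<in>D. g t)) = (\<Sum>t\<in>D. f (xs @ g t # replicate l (\<Sum>t\<in>D. g t)))"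
    using multilinear_sum_slot[OF f len] by simp
  also have "\<dots> = (\<Sum>t\<in>D. \<Sum>ts\<in>?L l. f (xs @ g t # map g ts))"
    using Suc.IH[of "xs @ [_]"] Suc.prems by simp
  also have "\<dots> = (\<Sum>(t, ts) \<in> D \<times> ?L l. f (xs @ map g (t # ts)))"
    by (simp add: sum.cartesian_product)
  also have "\<dots> = (\<Sum>ts\<in>?L (Suc l). f (xs @ map g ts))"
  proof -
    have "bij_betw (\<lambda>(t, ts). t # ts) (D \<times> ?L l) (?L (Suc l))"
      by (rule bij_betw_byWitness[where f' = "\<lambda>ts. (hd ts, tl ts)"]) (auto simp: length_Suc_conv)
    from sum.reindex_bij_betw[OF this, of "\<lambda>ts. f (xs @ map g ts)"]
    show ?thesis by (simp add: case_prod_unfold)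
  qed
  finally show ?case .
qed

lemma multilinear_replicate_diff:
  assumes "multilinear scale n f" "length xs + j = n"
  shows "f (xs @ replicate j u) - f (xs @ replicate j v) =
    (\<Sum>i<j. f (xs @ replicate i v @ (u - v) # replicate (j - Suc i) u))"
  using assms(2)
proof (induction j arbitrary: xs)
  case 0 then show ?case by simp
next
  case (Suc j)
  have len: "length xs + length (replicate j u) + 1 = n" using Suc.prems by simp
  have "f (xs @ replicate (Suc j) u) - f (xs @ replicate (Suc j) v) =
      f (xs @ (u - v) # replicate j u) + (f ((xs @ [v]) @ replicate j u) - f ((xs @ [v]) @ replicate j v))"
    using multilinear_diff_slot[OF assms(1) len, of u v] by simp
  also have "\<dots> = f (xs @ (u - v) # replicate j u) +
      (\<Sum>i<j. f ((xs @ [v]) @ replicate i v @ (u - v) # replicate (j - Suc i) u))"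
    using Suc.IH[of "xs @ [v]"] Suc.prems by simp
  also have "\<dots> = (\<Sum>i<Suc j. f (xs @ replicate i v @ (u - v) # replicate (Suc j - Suc i) u))"
    by (subst sum.lessThan_Suc_shift) simp
  finally show ?case .
qed

lemma multilinear_zero: "multilinear scale n (\<lambda>xs. 0)"
  by (rule multilinearI) auto

lemma multilinear_add:
  "multilinear scale n f \<Longrightarrow> multilinear scale n g \<Longrightarrow> multilinear scale n (\<lambda>xs. f xs + g xs)"
  by (rule multilinearI) (auto simp: multilinear_add_slot multilinear_scale_slot scale_right_distrib)

lemma multilinear_uminus: "multilinear scale n f \<Longrightarrow> multilinear scale n (\<lambda>xs. - f xs)"
  by (rule multilinearI) (auto simp: multilinear_add_slot multilinear_scale_slot)

lemma homogeneous_map_sum: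
  "(\<And>i. i \<in> I \<Longrightarrow> homogeneous_map scale n (h i)) \<Longrightarrow> homogeneous_map scale n (\<lambda>y. \<Sum>i\<in>I. h i y)"
proof (induction I rule: infinite_finite_induct)
  case (infinite A) then show ?case unfolding homogeneous_map_def using multilinear_zero by auto
next
  case empty then show ?case unfolding homogeneous_map_def using multilinear_zero by auto
next
  case (insert i F)
  obtain \<phi> \<psi> where "multilinear scale n \<phi>" "\<forall>y. h i y = \<phi> (replicate n y)"
    "multilinear scale n \<psi>" "\<forall>y. (\<Sum>i\<in>F. h i y) = \<psi> (replicate n y)"
    using insert unfolding homogeneous_map_def by (metis insertCI)
  then show ?case using insert.hyps unfolding homogeneous_map_def
    by (intro exI[of _ "\<lambda>xs. \<phi> xs + \<psi> xs"]) (simp add: multilinear_add)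
qed

lemma poly_map_sum_homogeneous:
  fixes h :: "nat \<Rightarrow> 'b \<Rightarrow> 'b"
  assumes "\<And>q. homogeneous_map scale q (h q)"
  shows "poly_map scale (\<lambda>y. \<Sum>q\<le>n. h q y)"
proof -
  obtain \<Phi> where "\<And>q. multilinear scale q (\<Phi> q)" "\<And>q y. h q y = \<Phi> q (replicate q y)"
    using assms unfolding homogeneous_map_def by metis
  then show ?thesis unfolding poly_map_def by auto
qed

end

section \<open>Polynomial curves and their order of vanishing at 0\<close>

inductive poly_curve :: "('k \<Rightarrow> 'v \<Rightarrow> 'v) \<Rightarrow> ('k \<Rightarrow> 'v::plus) \<Rightarrow> bool" for scale where
  poly_curve_const: "poly_curve scale (\<lambda>x. c)"
| poly_curve_add: "poly_curve scale p \<Longrightarrow> poly_curve scale q \<Longrightarrow> poly_curve scale (\<lambda>x. p x + q x)"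
| poly_curve_mult_var: "poly_curve scale p \<Longrightarrow> poly_curve scale (\<lambda>x. scale x (p x))"

definition vanishes_to :: "('k::power \<Rightarrow> 'v \<Rightarrow> 'v) \<Rightarrow> nat \<Rightarrow> ('k \<Rightarrow> 'v::plus) \<Rightarrow> bool" where
  "vanishes_to scale N p \<longleftrightarrow> (\<exists>r. poly_curve scale r \<and> (\<forall>x. p x = scale (x ^ N) (r x)))"

context vector_space
begin

lemma poly_curve_uminus: "poly_curve scale p \<Longrightarrow> poly_curve scale (\<lambda>x. - p x)"
proof (induction rule: poly_curve.induct)
  case (poly_curve_add p q)
  have "poly_curve scale (\<lambda>x. - p x + - q x)" by (rule poly_curve.poly_curve_add[OF poly_curve_add.IH])
  then show ?case by (simp add: add.commute)
next
  case (poly_curve_mult_var p)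
  have "poly_curve scale (\<lambda>x. scale x (- p x))" by (rule poly_curve.poly_curve_mult_var[OF poly_curve_mult_var.IH])
  then show ?case by simp
qed (rule poly_curve_const)

lemma poly_curve_mult_power:
  assumes "poly_curve scale p"
  shows "poly_curve scale (\<lambda>x. scale (x ^ N) (p x))"
proof (induction N)
  case 0 then show ?case using assms by simp
next
  case (Suc N)
  have "poly_curve scale (\<lambda>x. scale x (scale (x ^ N) (p x)))" by (rule poly_curve_mult_var[OF Suc.IH])
  then show ?case by simp
qed

lemma poly_curve_sum:
  "(\<And>i. i \<in> I \<Longrightarrow> poly_curve scale (p i)) \<Longrightarrow> poly_curve scale (\<lambda>x. \<Sum>i\<in>I. p i x)"
proof (induction I rule: infinite_finite_induct)
  case (insert i F)
  have "poly_curve scale (\<lambda>x. p i x + (\<Sum>i\<in>F. p i x))"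
    by (rule poly_curve_add) (use insert in auto)
  then show ?case using insert.hyps by simp
qed (simp_all add: poly_curve_const[where c = 0])

lemma poly_curve_split_at_0:
  "poly_curve scale p \<Longrightarrow> \<exists>r. poly_curve scale r \<and> (\<forall>x. p x = p 0 + scale x (r x))"
proof (induction rule: poly_curve.induct)
  case (poly_curve_const c)
  show ?case by (intro exI[of _ "\<lambda>x. 0"]) (simp add: poly_curve.poly_curve_const)
next
  case (poly_curve_add p q)
  then obtain r1 r2 where r: "poly_curve scale r1" "poly_curve scale r2"
    and e: "\<forall>x. p x = p 0 + scale x (r1 x)" "\<forall>x. q x = q 0 + scale x (r2 x)" by blast
  have "p x + q x = (p 0 + q 0) + scale x (r1 x + r2 x)" for x
    using e[THEN spec, of x] by (simp only: scale_right_distrib add_ac)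
  then show ?case using poly_curve.poly_curve_add[OF r] by blast
next
  case (poly_curve_mult_var p) then show ?case by (intro exI[of _ p]) simp
qed

lemma poly_curve_multilinear:
  assumes f: "multilinear scale n f"
  shows "\<forall>p\<in>set ps. poly_curve scale p \<Longrightarrow> length ps + length cs = n \<Longrightarrow>
    poly_curve scale (\<lambda>x. f (map (\<lambda>p. p x) ps @ cs))"
proof (induction ps arbitrary: cs rule: rev_induct)
  case Nil then show ?case by (simp add: poly_curve_const)
next
  case (snoc p ps)
  have len: "length (map (\<lambda>p. p x) ps) + length cs + 1 = n" for x using snoc.prems by simp
  have "poly_curve scale p" using snoc.prems by simp
  then have "poly_curve scale (\<lambda>x. f (map (\<lambda>p. p x) ps @ p x # cs))"
  proof (induction rule: poly_curve.induct)
    case (poly_curve_const c)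
    then show ?case using snoc.IH[of "c # cs"] snoc.prems by simp
  next
    case (poly_curve_add p q)
    then show ?case
      using poly_curve.poly_curve_add[OF poly_curve_add.IH] multilinear_add_slot[OF f len] by simp
  next
    case (poly_curve_mult_var p)
    then show ?case
      using poly_curve.poly_curve_mult_var[OF poly_curve_mult_var.IH] multilinear_scale_slot[OF f len] by simp
  qed
  then show ?case by simp
qed

lemma vanishes_to_imp_poly_curve: "vanishes_to scale N p \<Longrightarrow> poly_curve scale p"
proof -
  assume "vanishes_to scale N p"
  then obtain r where r: "poly_curve scale r" and "p = (\<lambda>x. scale (x ^ N) (r x))"
    unfolding vanishes_to_def by auto
  then show "poly_curve scale p" using poly_curve_mult_power[OF r] by simp
qed

lemma vanishes_to_0_iff: "vanishes_to scale 0 p \<longleftrightarrow> poly_curve scale p"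
proof
  assume "poly_curve scale p"
  then show "vanishes_to scale 0 p" unfolding vanishes_to_def by auto
qed (rule vanishes_to_imp_poly_curve)

lemma vanishes_to_zero: "vanishes_to scale N (\<lambda>x. 0)"
  unfolding vanishes_to_def using poly_curve_const[where c = 0] by auto

lemma vanishes_to_mult_power:
  "vanishes_to scale N p \<Longrightarrow> vanishes_to scale (M + N) (\<lambda>x. scale (x ^ M) (p x))"
  unfolding vanishes_to_def by (auto simp: power_add)

lemma vanishes_to_mono:
  assumes "vanishes_to scale N p" "M \<le> N"
  shows "vanishes_to scale M p"
proof -
  obtain r where r: "poly_curve scale r" "\<And>x. p x = scale (x ^ N) (r x)"
    using assms(1) unfolding vanishes_to_def by auto
  have "p x = scale (x ^ M) (scale (x ^ (N - M)) (r x))" for x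
    using assms(2) by (simp add: r(2) flip: power_add)
  then show ?thesis unfolding vanishes_to_def using poly_curve_mult_power[OF r(1)] by blast
qed

lemma vanishes_to_monomial:
  assumes "N \<le> M"
  shows "vanishes_to scale N (\<lambda>x. scale (x ^ M) c)"
proof -
  have "vanishes_to scale M (\<lambda>x. scale (x ^ M) c)"
    unfolding vanishes_to_def by (intro exI[of _ "\<lambda>x. c"]) (simp add: poly_curve_const)
  then show ?thesis using assms by (rule vanishes_to_mono)
qed

lemma vanishes_to_add:
  assumes "vanishes_to scale N p" "vanishes_to scale N q"
  shows "vanishes_to scale N (\<lambda>x. p x + q x)"
proof -
  obtain r s where "poly_curve scale r" "\<And>x. p x = scale (x ^ N) (r x)"
    "poly_curve scale s" "\<And>x. q x = scale (x ^ N) (s x)"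
    using assms unfolding vanishes_to_def by metis
  then show ?thesis unfolding vanishes_to_def
    by (intro exI[of _ "\<lambda>x. r x + s x"]) (simp add: poly_curve_add scale_right_distrib)
qed

lemma vanishes_to_uminus: "vanishes_to scale N p \<Longrightarrow> vanishes_to scale N (\<lambda>x. - p x)"
proof -
  assume "vanishes_to scale N p"
  then obtain r where "poly_curve scale r" "\<And>x. p x = scale (x ^ N) (r x)"
    unfolding vanishes_to_def by auto
  then show ?thesis unfolding vanishes_to_def
    by (intro exI[of _ "\<lambda>x. - r x"]) (simp add: poly_curve_uminus)
qed

lemma vanishes_to_diff:
  "vanishes_to scale N p \<Longrightarrow> vanishes_to scale N q \<Longrightarrow> vanishes_to scale N (\<lambda>x. p x - q x)"
  using vanishes_to_add[of N p "\<lambda>x. - q x"] vanishes_to_uminus[of N q] by simp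

lemma vanishes_to_sum:
  "(\<And>i. i \<in> I \<Longrightarrow> vanishes_to scale N (p i)) \<Longrightarrow> vanishes_to scale N (\<lambda>x. \<Sum>i\<in>I. p i x)"
proof (induction I rule: infinite_finite_induct)
  case (insert i F) then show ?case using vanishes_to_add[of N "p i" "\<lambda>x. \<Sum>i\<in>F. p i x"] by simp
qed (simp_all add: vanishes_to_zero)

lemma vanishes_to_1_iff: "vanishes_to scale 1 p \<longleftrightarrow> poly_curve scale p \<and> p 0 = 0"
proof
  assume h: "vanishes_to scale 1 p"
  then show "poly_curve scale p \<and> p 0 = 0"
    using vanishes_to_imp_poly_curve[OF h] unfolding vanishes_to_def by auto
next
  assume "poly_curve scale p \<and> p 0 = 0"
  then obtain r where r: "poly_curve scale r" and e: "\<forall>x. p x = p 0 + scale x (r x)" and "p 0 = 0"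
    using poly_curve_split_at_0 by blast
  then have "p x = scale (x ^ 1) (r x)" for x using e[THEN spec, of x] by simp
  then show "vanishes_to scale 1 p" unfolding vanishes_to_def using r by blast
qed

lemma vanishes_to_multilinear:
  assumes f: "multilinear scale n f"
  shows "\<forall>p\<in>set ps. poly_curve scale p \<Longrightarrow> \<forall>(N, p)\<in>set qs. vanishes_to scale N p \<Longrightarrow>
    length ps + length qs = n \<Longrightarrow>
    vanishes_to scale (sum_list (map fst qs)) (\<lambda>x. f (map (\<lambda>p. p x) ps @ map (\<lambda>(N, p). p x) qs))"
proof (induction qs arbitrary: ps)
  case Nil then show ?case using poly_curve_multilinear[OF f, of ps "[]"] by (simp add: vanishes_to_0_iff)
next
  case (Cons Np qs)
  obtain N p where Np: "Np = (N, p)" by fastforce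
  obtain r where r: "poly_curve scale r" "\<And>x. p x = scale (x ^ N) (r x)"
    using Cons.prems Np unfolding vanishes_to_def by auto
  have IH: "vanishes_to scale (sum_list (map fst qs))
      (\<lambda>x. f (map (\<lambda>p. p x) (ps @ [r]) @ map (\<lambda>(N, p). p x) qs))"
    using Cons.IH[of "ps @ [r]"] Cons.prems r(1) Np by auto
  have len: "length (map (\<lambda>p. p x) ps) + length (map (\<lambda>(N, p). p x) qs) + 1 = n" for x
    using Cons.prems Np by simp
  have "f (map (\<lambda>p. p x) ps @ map (\<lambda>(N, p). p x) (Np # qs)) =
      scale (x ^ N) (f (map (\<lambda>p. p x) (ps @ [r]) @ map (\<lambda>(N, p). p x) qs))" for x
    using multilinear_scale_slot[OF f len[of x], of "x ^ N" "r x"] r(2) Np by simp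
  then show ?case using vanishes_to_mult_power[OF IH, of N] Np by simp
qed

lemma vanishes_to_multilinear_diff:
  assumes f: "multilinear scale l f" and u: "vanishes_to scale A u" and v: "vanishes_to scale A v"
    and uv: "vanishes_to scale N (\<lambda>x. u x - v x)"
  shows "vanishes_to scale (N + (l - 1) * A) (\<lambda>x. f (replicate l (u x)) - f (replicate l (v x)))"
proof -
  have "vanishes_to scale (N + (l - 1) * A)
      (\<lambda>x. f (replicate i (v x) @ (u x - v x) # replicate (l - Suc i) (u x)))" if i: "i < l" for i
  proof -
    define qs where "qs = replicate i (A, v) @ (N, \<lambda>x. u x - v x) # replicate (l - Suc i) (A, u)"
    have "vanishes_to scale (sum_list (map fst qs)) (\<lambda>x. f (map (\<lambda>p. p x) [] @ map (\<lambda>(N, p). p x) qs))"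
      using i by (intro vanishes_to_multilinear[OF f]) (auto simp: qs_def u v uv)
    moreover have "sum_list (map fst qs) = N + (l - 1) * A"
    proof -
      have "sum_list (map fst qs) = N + (i + (l - Suc i)) * A"
        by (simp add: qs_def sum_list_replicate algebra_simps)
      then show ?thesis using i by simp
    qed
    ultimately have "vanishes_to scale (N + (l - 1) * A)
        (\<lambda>x. f (map (\<lambda>p. p x) [] @ map (\<lambda>(N, p). p x) qs))" by simp
    then show ?thesis by (simp add: qs_def)
  qed
  then have "vanishes_to scale (N + (l - 1) * A)
      (\<lambda>x. \<Sum>i<l. f (replicate i (v x) @ (u x - v x) # replicate (l - Suc i) (u x)))"
    by (intro vanishes_to_sum) simp
  then show ?thesis using multilinear_replicate_diff[OF f, of "[]"] by simp
qed

lemma poly_map_along_ray: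
  assumes "poly_map scale G"
  shows "\<exists>d. \<forall>a. \<exists>c. \<forall>x. G (scale x a) = (\<Sum>l\<le>d. scale (x ^ l) (c l))"
proof -
  obtain d \<Phi> where \<Phi>: "\<And>l. l \<le> d \<Longrightarrow> multilinear scale l (\<Phi> l)"
    and G: "G = (\<lambda>y. \<Sum>l\<le>d. \<Phi> l (replicate l y))"
    using assms unfolding poly_map_def by blast
  have "G (scale x a) = (\<Sum>l\<le>d. scale (x ^ l) (\<Phi> l (replicate l a)))" for a x
    unfolding G by (rule sum.cong) (simp_all add: multilinear_replicate_scale[OF \<Phi>])
  then show ?thesis by (intro exI[of _ d] allI exI[of _ "\<lambda>l. \<Phi> l (replicate l _)"])
qed

lemma poly_curve_poly_map:
  assumes "poly_map scale G" "poly_curve scale p"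
  shows "poly_curve scale (\<lambda>x. G (p x))"
proof -
  obtain d \<Phi> where \<Phi>: "\<And>l. l \<le> d \<Longrightarrow> multilinear scale l (\<Phi> l)"
    and G: "G = (\<lambda>y. \<Sum>l\<le>d. \<Phi> l (replicate l y))"
    using assms(1) unfolding poly_map_def by blast
  have "poly_curve scale (\<lambda>x. \<Phi> l (map (\<lambda>p. p x) (replicate l p) @ []))" if "l \<le> d" for l
    by (rule poly_curve_multilinear[OF \<Phi>[OF that]]) (use assms(2) in auto)
  then show ?thesis unfolding G by (intro poly_curve_sum) simp
qed

lemma vanishes_to_poly_map_diff:
  assumes "poly_map scale G" "poly_curve scale u" "poly_curve scale v"
    and "vanishes_to scale N (\<lambda>x. u x - v x)"
  shows "vanishes_to scale N (\<lambda>x. G (u x) - G (v x))"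
proof -
  obtain d \<Phi> where \<Phi>: "\<And>l. l \<le> d \<Longrightarrow> multilinear scale l (\<Phi> l)"
    and G: "G = (\<lambda>y. \<Sum>l\<le>d. \<Phi> l (replicate l y))"
    using assms(1) unfolding poly_map_def by blast
  have "vanishes_to scale N (\<lambda>x. \<Phi> l (replicate l (u x)) - \<Phi> l (replicate l (v x)))" if "l \<le> d" for l
    using vanishes_to_multilinear_diff[OF \<Phi>[OF that], of 0 u v N] assms(2-4)
    by (simp add: vanishes_to_0_iff)
  then have "vanishes_to scale N (\<lambda>x. \<Sum>l\<le>d. \<Phi> l (replicate l (u x)) - \<Phi> l (replicate l (v x)))"
    by (intro vanishes_to_sum) simp
  then show ?thesis unfolding G by (simp add: sum_subtractf)
qed

end

locale fin_dim_vector_space_char_0 = finite_dimensional_vector_space scale B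
  for scale :: "'k::field_char_0 \<Rightarrow> 'v::ab_group_add \<Rightarrow> 'v" and B :: "'v set"
begin

abbreviation coord :: "'v \<Rightarrow> 'v \<Rightarrow> 'k" where "coord v b \<equiv> representation B v b"

lemma coord_add: "coord (u + v) b = coord u b + coord v b"
  using representation_add[OF independent_Basis] span_Basis by auto

lemma coord_scale: "coord (scale c v) b = c * coord v b"
  using representation_scale[OF independent_Basis] span_Basis by auto

lemma coord_sum: "coord (\<Sum>i\<in>I. f i) b = (\<Sum>i\<in>I. coord (f i) b)"
  using representation_sum[OF independent_Basis, of I f] span_Basis by auto

lemma eq_0_if_coord_eq_0: "(\<And>b. coord v b = 0) \<Longrightarrow> v = 0"
  using sum_representation_eq[OF independent_Basis _ finite_Basis subset_refl, of v] span_Basis by simp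

lemma poly_curve_coord_poly: "poly_curve scale p \<Longrightarrow> \<exists>P. \<forall>x. coord (p x) b = poly P x"
proof (induction rule: poly_curve.induct)
  case (poly_curve_const c) then show ?case by (intro exI[of _ "[:coord c b:]"]) simp
next
  case (poly_curve_add p q)
  then obtain P Q where "\<forall>x. coord (p x) b = poly P x" "\<forall>x. coord (q x) b = poly Q x" by blast
  then have "coord (p x + q x) b = poly (P + Q) x" for x by (simp add: coord_add)
  then show ?case by blast
next
  case (poly_curve_mult_var p)
  then obtain P where "\<forall>x. coord (p x) b = poly P x" by blast
  then have "coord (scale x (p x)) b = poly ([:0, 1:] * P) x" for x by (simp add: coord_scale)
  then show ?case by blast
qed

text \<open>This is the only place where characteristic zero is used: over an infinite field a
  polynomial is determined by its values.\<close>

lemma coeff_eq_0_if_vanishes_to: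
  assumes "vanishes_to scale N p" "\<forall>x. coord (p x) b = poly P x" "j < N"
  shows "coeff P j = 0"
proof -
  obtain r where r: "poly_curve scale r" "\<forall>x. p x = scale (x ^ N) (r x)"
    using assms(1) unfolding vanishes_to_def by blast
  obtain Q where Q: "\<forall>x. coord (r x) b = poly Q x" using poly_curve_coord_poly[OF r(1)] by blast
  have "poly P = poly (monom 1 N * Q)"
    using assms(2) Q r(2) by (auto simp: coord_scale poly_monom)
  then have "P = monom 1 N * Q" using poly_eq_poly_eq_iff by blast
  then show ?thesis using assms(3) by (simp add: coeff_monom_mult)
qed

lemma vanishes_to_coeff_eq_0:
  assumes "vanishes_to scale N (\<lambda>x. \<Sum>j\<le>n. scale (x ^ j) (c j))" "j < N" "j \<le> n"
  shows "c j = 0"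
proof (rule eq_0_if_coord_eq_0)
  fix b
  define P where "P = (\<Sum>i\<le>n. monom (coord (c i) b) i)"
  have "\<forall>x. coord (\<Sum>j\<le>n. scale (x ^ j) (c j)) b = poly P x"
    by (simp add: P_def poly_sum poly_monom coord_sum coord_scale mult.commute)
  from coeff_eq_0_if_vanishes_to[OF assms(1) this assms(2)]
  show "coord (c j) b = 0" using assms(3) by (simp add: P_def coeff_sum coeff_monom)
qed

lemma eq_0_if_vanishes_to_all:
  assumes "\<And>N. vanishes_to scale N p"
  shows "p x = 0"
proof (rule eq_0_if_coord_eq_0)
  fix b
  obtain P where P: "\<forall>x. coord (p x) b = poly P x"
    using poly_curve_coord_poly[OF vanishes_to_imp_poly_curve[OF assms]] by blast
  have "coeff P j = 0" for j by (rule coeff_eq_0_if_vanishes_to[OF assms[of "Suc j"] P]) simp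
  then have "P = 0" by (simp add: poly_eqI)
  then show "coord (p x) b = 0" using P by simp
qed

end

section \<open>Terms\<close>

lemma tsize_ge_1: "wf_term m t \<Longrightarrow> 1 \<le> tsize t"
proof (induction t)
  case (Op ts)
  then obtain t where t: "t \<in> set ts" by (cases ts) auto
  then have "1 \<le> tsize t" using Op by auto
  also have "tsize t \<le> sum_list (map tsize ts)" using t by (simp add: member_le_sum_list)
  finally show ?case by simp
qed simp

lemma tsize_less_Op:
  assumes "wf_term m (Op ts)" "t \<in> set ts"
  shows "tsize t < tsize (Op ts)"
proof -
  obtain t' where t': "t' \<in> set (remove1 t ts)"
    using assms by (cases "remove1 t ts") (auto simp: length_remove1 dest: arg_cong[of _ _ length])
  then have "t' \<in> set ts" using set_remove1_subset by fastforce
  then have "1 \<le> tsize t'" using assms(1) tsize_ge_1 by auto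
  also have "tsize t' \<le> sum_list (map tsize (remove1 t ts))" using t' by (simp add: member_le_sum_list)
  finally show ?thesis using sum_list_map_remove1[OF assms(2), of tsize] by simp
qed

primrec terms_depth_le :: "nat \<Rightarrow> nat \<Rightarrow> yterm set" where
  "terms_depth_le m 0 = {X}"
| "terms_depth_le m (Suc k) =
    insert X (\<Union>l\<in>{2..m}. Op ` {ts. set ts \<subseteq> terms_depth_le m k \<and> length ts = l})"

lemma finite_terms_depth_le: "finite (terms_depth_le m k)"
  by (induction k) (auto intro!: finite_lists_length_eq)

lemma wf_term_if_depth_le: "t \<in> terms_depth_le m k \<Longrightarrow> wf_term m t"
  by (induction k arbitrary: t) (auto simp: subset_iff)

lemma depth_le_if_tsize_le: "wf_term m t \<Longrightarrow> tsize t \<le> k + 1 \<Longrightarrow> t \<in> terms_depth_le m k"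
proof (induction t arbitrary: k)
  case X then show ?case by (cases k) auto
next
  case (Op ts)
  obtain t0 where t0: "t0 \<in> set ts" using Op.prems(1) by (cases ts) auto
  then have "2 \<le> tsize (Op ts)"
    using tsize_ge_1[of m t0] tsize_less_Op[OF Op.prems(1)] Op.prems(1) by fastforce
  then obtain k' where k: "k = Suc k'" using Op.prems(2) by (cases k) auto
  have "t \<in> terms_depth_le m k'" if t: "t \<in> set ts" for t
    using Op.IH[OF t] tsize_less_Op[OF Op.prems(1) t] Op.prems k t by simp
  then show ?case using Op.prems(1) unfolding k by (auto intro!: bexI[of _ "length ts"])
qed

lemma terms_of_size_subset_depth_le: "q \<le> k + 1 \<Longrightarrow> terms_of_size m q \<subseteq> terms_depth_le m k"
  unfolding terms_of_size_def using depth_le_if_tsize_le by auto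

lemma terms_of_size_0: "terms_of_size m 0 = {}"
  unfolding terms_of_size_def using tsize_ge_1 by fastforce

lemma prod_list_map_power: "prod_list (map (\<lambda>t. c ^ f t) ts) = (c::'a::comm_monoid_mult) ^ sum_list (map f ts)"
  by (induction ts) (simp_all add: power_add)

section \<open>Yagzhev sums and the inverse of \<open>id - P\<close>\<close>

locale yagzhev_setup = fin_dim_vector_space_char_0 scale B
  for scale :: "'k::field_char_0 \<Rightarrow> 'v::ab_group_add \<Rightarrow> 'v" and B :: "'v set" +
  fixes m :: nat and Psi :: "nat \<Rightarrow> 'v list \<Rightarrow> 'v"
  assumes m_ge_2: "2 \<le> m" and multilinear_Psi: "l \<in> {2..m} \<Longrightarrow> multilinear scale l (Psi l)"
begin

definition nonlinear_part :: "'v \<Rightarrow> 'v" where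
  "nonlinear_part y = (\<Sum>l=2..m. Psi l (replicate l y))"

definition yagzhev_sum :: "nat \<Rightarrow> 'v \<Rightarrow> 'v" where
  "yagzhev_sum q a = (\<Sum>t\<in>terms_of_size m q. teval Psi t a)"

definition yagzhev_inverse :: "nat \<Rightarrow> 'v \<Rightarrow> 'v" where
  "yagzhev_inverse q0 a = (\<Sum>q\<le>q0. yagzhev_sum q a)"

definition yagzhev_series :: "nat \<Rightarrow> 'v \<Rightarrow> 'k \<Rightarrow> 'v" where
  "yagzhev_series n a x = (\<Sum>q\<le>n. scale (x ^ q) (yagzhev_sum q a))"

definition picard_iterate :: "nat \<Rightarrow> 'v \<Rightarrow> 'v" where
  "picard_iterate k a = (\<Sum>t\<in>terms_depth_le m k. teval Psi t a)"

lemma multilinear_Psi_Op: "wf_term m (Op ts) \<Longrightarrow> multilinear scale (length ts) (Psi (length ts))"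
  using multilinear_Psi by simp

lemma teval_scale: "wf_term m t \<Longrightarrow> teval Psi t (scale c a) = scale (c ^ tsize t) (teval Psi t a)"
proof (induction t)
  case (Op ts)
  let ?ps = "map (\<lambda>t. (c ^ tsize t, teval Psi t a)) ts"
  have "teval Psi (Op ts) (scale c a) = Psi (length ts) (map (\<lambda>(c, y). scale c y) ?ps)"
    using Op by (simp add: comp_def cong: map_cong)
  also have "\<dots> = scale (prod_list (map fst ?ps)) (Psi (length ts) (map snd ?ps))"
    using multilinear_scale_slots[OF multilinear_Psi_Op[OF Op.prems], of "[]" ?ps] by simp
  also have "\<dots> = scale (c ^ tsize (Op ts)) (teval Psi (Op ts) a)"
    by (simp add: comp_def prod_list_map_power)
  finally show ?case .
qed simp

lemma homogeneous_teval: "wf_term m t \<Longrightarrow> homogeneous_map scale (tsize t) (teval Psi t)"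
proof (induction t)
  case X then show ?case unfolding homogeneous_map_def using multilinear_hd by fastforce
next
  case (Op ts)
  then have "\<forall>t\<in>set ts. \<exists>\<phi>. multilinear scale (tsize t) \<phi> \<and> (\<forall>y. teval Psi t y = \<phi> (replicate (tsize t) y))"
    unfolding homogeneous_map_def by simp
  then obtain \<phi> where \<phi>: "\<And>t. t \<in> set ts \<Longrightarrow> multilinear scale (tsize t) (\<phi> t)"
    "\<And>t y. t \<in> set ts \<Longrightarrow> teval Psi t y = \<phi> t (replicate (tsize t) y)"
    by metis
  let ?ps = "map (\<lambda>t. (tsize t, \<phi> t)) ts"
  obtain g where g: "multilinear scale (0 + sum_list (map fst ?ps)) g"
    "\<forall>y. g (replicate (0 + sum_list (map fst ?ps)) y) =
       Psi (length ts) (replicate 0 y @ map (\<lambda>(n, \<phi>). \<phi> (replicate n y)) ?ps)"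
    using multilinear_compose_replicate[of scale 0 ?ps "Psi (length ts)"] multilinear_Psi_Op[OF Op.prems] \<phi>(1)
    by auto
  have "teval Psi (Op ts) y = g (replicate (tsize (Op ts)) y)" for y
    using g(2) \<phi>(2) by (simp add: comp_def cong: map_cong)
  moreover have "multilinear scale (tsize (Op ts)) g" using g(1) by (simp add: comp_def)
  ultimately show ?case unfolding homogeneous_map_def by blast
qed

lemma yagzhev_sum_scale: "yagzhev_sum q (scale c a) = scale (c ^ q) (yagzhev_sum q a)"
  unfolding yagzhev_sum_def scale_sum_right
  by (rule sum.cong[OF refl]) (auto simp: terms_of_size_def teval_scale)

lemma yagzhev_sum_0_left: "yagzhev_sum 0 a = 0"
  unfolding yagzhev_sum_def terms_of_size_0 by simp

lemma yagzhev_sum_0_right: "yagzhev_sum q 0 = 0"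
  using yagzhev_sum_scale[of q 0 0] yagzhev_sum_0_left by (cases q) simp_all

lemma homogeneous_yagzhev_sum: "homogeneous_map scale q (yagzhev_sum q)"
proof -
  have "homogeneous_map scale q (\<lambda>a. \<Sum>t\<in>terms_of_size m q. teval Psi t a)"
    by (rule homogeneous_map_sum) (use homogeneous_teval in \<open>auto simp: terms_of_size_def\<close>)
  then show ?thesis by (simp add: yagzhev_sum_def[abs_def])
qed

lemma poly_map_yagzhev_inverse: "poly_map scale (yagzhev_inverse q0)"
  using poly_map_sum_homogeneous[OF homogeneous_yagzhev_sum] by (simp add: yagzhev_inverse_def[abs_def])

lemma yagzhev_inverse_scale: "yagzhev_inverse q0 (scale x a) = yagzhev_series q0 a x"
  by (simp add: yagzhev_inverse_def yagzhev_series_def yagzhev_sum_scale)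

lemma yagzhev_inverse_0: "yagzhev_inverse q0 0 = 0"
  by (simp add: yagzhev_inverse_def yagzhev_sum_0_right)

lemma yagzhev_series_eq_if_yagzhev:
  assumes "\<forall>q\<ge>q0. \<forall>a. yagzhev_sum q a = 0" "q0 \<le> n"
  shows "yagzhev_series n a x = yagzhev_series q0 a x"
  unfolding yagzhev_series_def by (rule sum.mono_neutral_right) (use assms in auto)

lemma vanishes_to_1_yagzhev_series: "vanishes_to scale 1 (yagzhev_series n a)"
proof -
  have "vanishes_to scale 1 (\<lambda>x. scale (x ^ q) (yagzhev_sum q a))" for q
  proof (cases q)
    case 0 then show ?thesis by (simp add: yagzhev_sum_0_left vanishes_to_zero)
  next
    case (Suc n) then show ?thesis by (intro vanishes_to_monomial) simp
  qed
  then show ?thesis unfolding yagzhev_series_def[abs_def] by (rule vanishes_to_sum)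
qed

lemma nonlinear_part_0: "nonlinear_part 0 = 0"
  unfolding nonlinear_part_def by (rule sum.neutral) (auto intro: multilinear_replicate_0[OF multilinear_Psi])

lemma poly_map_id_minus_nonlinear_part: "poly_map scale (\<lambda>y. y - nonlinear_part y)"
proof -
  define \<Phi> where "\<Phi> l = (if l = 1 then hd else if l \<in> {2..m} then (\<lambda>xs. - Psi l xs) else (\<lambda>xs. 0))" for l
  have "multilinear scale l (\<Phi> l)" for l
    unfolding \<Phi>_def using multilinear_hd multilinear_zero multilinear_uminus[OF multilinear_Psi] by auto
  moreover have "y - nonlinear_part y = (\<Sum>l\<le>m. \<Phi> l (replicate l y))" for y
  proof -
    have "{..m} = insert 0 (insert 1 {2..m})" using m_ge_2 by auto
    then have "(\<Sum>l\<le>m. \<Phi> l (replicate l y)) = \<Phi> 0 [] + (\<Phi> 1 [y] + (\<Sum>l=2..m. \<Phi> l (replicate l y)))"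
      by simp
    also have "(\<Sum>l=2..m. \<Phi> l (replicate l y)) = - nonlinear_part y"
      unfolding nonlinear_part_def sum_negf[symmetric] by (rule sum.cong) (auto simp: \<Phi>_def)
    finally show ?thesis by (simp add: \<Phi>_def)
  qed
  ultimately show ?thesis unfolding poly_map_def by blast
qed

text \<open>The gain of one order comes from \<open>Psi l\<close> having degree \<open>l \<ge> 2\<close>.\<close>

lemma vanishes_to_nonlinear_part_diff:
  assumes "vanishes_to scale 1 u" "vanishes_to scale 1 v" "vanishes_to scale N (\<lambda>x. u x - v x)"
  shows "vanishes_to scale (Suc N) (\<lambda>x. nonlinear_part (u x) - nonlinear_part (v x))"
proof -
  have "vanishes_to scale (Suc N) (\<lambda>x. Psi l (replicate l (u x)) - Psi l (replicate l (v x)))"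
    if l: "l \<in> {2..m}" for l
    using l by (intro vanishes_to_mono[OF vanishes_to_multilinear_diff[OF multilinear_Psi[OF l] assms]]) auto
  then have "vanishes_to scale (Suc N)
      (\<lambda>x. \<Sum>l=2..m. Psi l (replicate l (u x)) - Psi l (replicate l (v x)))"
    by (rule vanishes_to_sum)
  then show ?thesis unfolding nonlinear_part_def by (simp add: sum_subtractf)
qed

lemma picard_iterate_Suc: "picard_iterate (Suc k) a = a + nonlinear_part (picard_iterate k a)"
proof -
  let ?L = "\<lambda>l. {ts. set ts \<subseteq> terms_depth_le m k \<and> length ts = l}"
  have fin: "finite (?L l)" for l by (rule finite_lists_length_eq[OF finite_terms_depth_le])
  have "X \<notin> (\<Union>l\<in>{2..m}. Op ` ?L l)" by auto
  then have "picard_iterate (Suc k) a = a + (\<Sum>t\<in>(\<Union>l\<in>{2..m}. Op ` ?L l). teval Psi t a)"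
    unfolding picard_iterate_def using fin by simp
  also have "(\<Sum>t\<in>(\<Union>l\<in>{2..m}. Op ` ?L l). teval Psi t a) = (\<Sum>l=2..m. \<Sum>t\<in>Op ` ?L l. teval Psi t a)"
    by (rule sum.UNION_disjoint) (auto simp: fin)
  also have "\<dots> = (\<Sum>l=2..m. \<Sum>ts\<in>?L l. Psi l (map (\<lambda>t. teval Psi t a) ts))"
    by (rule sum.cong[OF refl], subst sum.reindex) (auto simp: inj_on_def intro: sum.cong)
  also have "\<dots> = nonlinear_part (picard_iterate k a)"
    unfolding nonlinear_part_def picard_iterate_def
    using multilinear_replicate_sum[OF multilinear_Psi finite_terms_depth_le, of _ "[]"] by simp
  finally show ?thesis .
qed

lemma picard_iterate_scale:
  "picard_iterate k (scale x a) = (\<Sum>t\<in>terms_depth_le m k. scale (x ^ tsize t) (teval Psi t a))"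
  unfolding picard_iterate_def by (rule sum.cong[OF refl]) (auto intro: teval_scale wf_term_if_depth_le)

lemma vanishes_to_1_picard_iterate: "vanishes_to scale 1 (\<lambda>x. picard_iterate k (scale x a))"
  unfolding picard_iterate_scale
proof (rule vanishes_to_sum, rule vanishes_to_monomial)
  fix t assume "t \<in> terms_depth_le m k"
  then show "1 \<le> tsize t" by (rule tsize_ge_1[OF wf_term_if_depth_le])
qed

text \<open>A term of size at most \<open>k + 1\<close> has depth at most \<open>k\<close>, so the \<open>k\<close>-th iterate contains all of them.\<close>

lemma picard_iterate_minus_yagzhev_series:
  "vanishes_to scale (k + 2) (\<lambda>x. picard_iterate k (scale x a) - yagzhev_series (k + 1) a x)"
proof -
  let ?f = "\<lambda>x t. scale (x ^ tsize t) (teval Psi t a)"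
  let ?small = "{t \<in> terms_depth_le m k. tsize t \<le> k + 1}"
  let ?large = "{t \<in> terms_depth_le m k. \<not> tsize t \<le> k + 1}"
  have small: "(\<Sum>t\<in>?small. ?f x t) = yagzhev_series (k + 1) a x" for x
  proof -
    have "(\<Sum>t\<in>?small. ?f x t) = (\<Sum>q\<le>k + 1. \<Sum>t\<in>{t \<in> ?small. tsize t = q}. ?f x t)"
      by (rule sum.group[symmetric]) (auto simp: finite_terms_depth_le)
    also have "\<dots> = (\<Sum>q\<le>k + 1. \<Sum>t\<in>terms_of_size m q. scale (x ^ q) (teval Psi t a))"
    proof (rule sum.cong[OF refl])
      fix q assume "q \<in> {..k + 1}"
      then have "{t \<in> ?small. tsize t = q} = terms_of_size m q"
        using terms_of_size_subset_depth_le[of q k] by (auto simp: terms_of_size_def wf_term_if_depth_le)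
      then show "(\<Sum>t\<in>{t \<in> ?small. tsize t = q}. ?f x t) =
          (\<Sum>t\<in>terms_of_size m q. scale (x ^ q) (teval Psi t a))"
        by (simp add: terms_of_size_def)
    qed
    finally show ?thesis by (simp add: yagzhev_series_def yagzhev_sum_def scale_sum_right)
  qed
  have "picard_iterate k (scale x a) = (\<Sum>t\<in>?small \<union> ?large. ?f x t)" for x
    unfolding picard_iterate_scale by (rule sum.cong) auto
  also have "\<dots> x = (\<Sum>t\<in>?small. ?f x t) + (\<Sum>t\<in>?large. ?f x t)" for x
    by (rule sum.union_disjoint) (auto simp: finite_terms_depth_le)
  finally have "picard_iterate k (scale x a) = yagzhev_series (k + 1) a x + (\<Sum>t\<in>?large. ?f x t)" for x
    by (simp only: small)
  then have "picard_iterate k (scale x a) - yagzhev_series (k + 1) a x = (\<Sum>t\<in>?large. ?f x t)" for x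
    by simp
  moreover have "vanishes_to scale (k + 2) (\<lambda>x. \<Sum>t\<in>?large. ?f x t)"
    by (rule vanishes_to_sum) (auto intro: vanishes_to_monomial)
  ultimately show ?thesis by simp
qed

lemma picard_iterate_residual:
  "vanishes_to scale (k + 3)
    (\<lambda>x. (picard_iterate (Suc k) (scale x a) - nonlinear_part (picard_iterate (Suc k) (scale x a))) - scale x a)"
proof -
  have "vanishes_to scale (k + 2) (\<lambda>x. picard_iterate (Suc k) (scale x a) - picard_iterate k (scale x a))"
  proof -
    have "vanishes_to scale (k + 2) (\<lambda>x.
        (picard_iterate (Suc k) (scale x a) - yagzhev_series (Suc k + 1) a x)
        - (picard_iterate k (scale x a) - yagzhev_series (k + 1) a x)
        + scale (x ^ (k + 2)) (yagzhev_sum (k + 2) a))"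
      by (intro vanishes_to_add vanishes_to_diff vanishes_to_monomial picard_iterate_minus_yagzhev_series
          vanishes_to_mono[OF picard_iterate_minus_yagzhev_series]) simp_all
    then show ?thesis by (simp add: yagzhev_series_def algebra_simps)
  qed
  then have "vanishes_to scale (Suc (k + 2)) (\<lambda>x.
      nonlinear_part (picard_iterate (Suc k) (scale x a)) - nonlinear_part (picard_iterate k (scale x a)))"
    by (rule vanishes_to_nonlinear_part_diff[OF vanishes_to_1_picard_iterate vanishes_to_1_picard_iterate])
  from vanishes_to_uminus[OF this] show ?thesis
    by (simp add: picard_iterate_Suc algebra_simps eval_nat_numeral)
qed

lemma yagzhev_inverse_right_inverse:
  assumes yagzhev: "\<forall>q\<ge>q0. \<forall>a. yagzhev_sum q a = 0"
  shows "yagzhev_inverse q0 a - nonlinear_part (yagzhev_inverse q0 a) = a"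
proof -
  define g where "g x = yagzhev_inverse q0 (scale x a)" for x
  define p where "p = (\<lambda>x. (g x - nonlinear_part (g x)) - scale x a)"
  have g: "vanishes_to scale 1 g"
    unfolding g_def yagzhev_inverse_scale by (rule vanishes_to_1_yagzhev_series)
  have "vanishes_to scale N p" for N
  proof -
    define K where "K = N + q0"
    define v where "v x = picard_iterate (Suc K) (scale x a)" for x
    have v: "vanishes_to scale 1 v" unfolding v_def by (rule vanishes_to_1_picard_iterate)
    have "g x = yagzhev_series (Suc K + 1) a x" for x
      using yagzhev_series_eq_if_yagzhev[OF yagzhev, of "Suc K + 1"]
      by (simp add: g_def K_def yagzhev_inverse_scale)
    then have gv: "vanishes_to scale (K + 3) (\<lambda>x. g x - v x)"
      using vanishes_to_uminus[OF picard_iterate_minus_yagzhev_series[of "Suc K" a]]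
      by (simp add: v_def eval_nat_numeral)
    have "vanishes_to scale (K + 3) (\<lambda>x. nonlinear_part (g x) - nonlinear_part (v x))"
      by (rule vanishes_to_mono[OF vanishes_to_nonlinear_part_diff[OF g v gv]]) simp
    moreover have "vanishes_to scale (K + 3) (\<lambda>x. (v x - nonlinear_part (v x)) - scale x a)"
      using picard_iterate_residual[of K a] by (simp add: v_def)
    ultimately have "vanishes_to scale (K + 3) (\<lambda>x. ((g x - v x) - (nonlinear_part (g x) - nonlinear_part (v x)))
        + ((v x - nonlinear_part (v x)) - scale x a))"
      by (intro vanishes_to_add[OF vanishes_to_diff[OF gv]])
    then have "vanishes_to scale (K + 3) p" by (simp add: p_def algebra_simps)
    then show ?thesis by (rule vanishes_to_mono) (simp add: K_def)
  qed
  then have "p 1 = 0" by (rule eq_0_if_vanishes_to_all)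
  then show ?thesis by (simp add: p_def g_def)
qed

lemma eq_if_id_minus_nonlinear_part_eq:
  assumes u: "vanishes_to scale 1 u" and v: "vanishes_to scale 1 v"
    and eq: "\<And>x. u x - nonlinear_part (u x) = v x - nonlinear_part (v x)"
  shows "u x = v x"
proof -
  have "vanishes_to scale N (\<lambda>x. u x - v x)" for N
  proof (induction N)
    case 0 show ?case by (rule vanishes_to_mono[OF vanishes_to_diff[OF u v]]) simp
  next
    case (Suc N)
    have "u x - v x = nonlinear_part (u x) - nonlinear_part (v x)" for x
      using eq[of x] by (simp add: algebra_simps)
    then show ?case using vanishes_to_nonlinear_part_diff[OF u v Suc.IH] by simp
  qed
  then show ?thesis using eq_0_if_vanishes_to_all[of "\<lambda>x. u x - v x"] by simp
qed

lemma poly_automorphism_if_yagzhev: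
  assumes yagzhev: "\<forall>q\<ge>q0. \<forall>a. yagzhev_sum q a = 0"
  shows "poly_automorphism scale (\<lambda>y. y - nonlinear_part y)"
proof -
  let ?F = "\<lambda>y. y - nonlinear_part y" and ?G = "yagzhev_inverse q0"
  have FG: "?F (?G a) = a" for a by (rule yagzhev_inverse_right_inverse[OF yagzhev])
  have GF: "?G (?F a) = a" for a
  proof -
    have ray: "poly_curve scale (\<lambda>x. scale x a)" by (intro poly_curve_mult_var poly_curve_const)
    have "vanishes_to scale 1 (\<lambda>x. ?G (?F (scale x a)))"
      unfolding vanishes_to_1_iff
      using poly_curve_poly_map[OF poly_map_yagzhev_inverse poly_curve_poly_map[OF poly_map_id_minus_nonlinear_part ray]]
      by (simp add: nonlinear_part_0 yagzhev_inverse_0)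
    moreover have "vanishes_to scale 1 (\<lambda>x. scale x a)" using vanishes_to_monomial[of 1 1] by simp
    ultimately have "?G (?F (scale x a)) = scale x a" for x
      by (rule eq_if_id_minus_nonlinear_part_eq) (simp add: FG)
    from this[of 1] show ?thesis by simp
  qed
  show ?thesis
    unfolding poly_automorphism_def using poly_map_id_minus_nonlinear_part poly_map_yagzhev_inverse FG GF
    by blast
qed

lemma yagzhev_series_approximates_left_inverse:
  assumes G: "poly_map scale G" and GF: "\<And>y. G (y - nonlinear_part y) = y"
  shows "vanishes_to scale (q + 3) (\<lambda>x. yagzhev_series (q + 2) a x - G (scale x a))"
proof -
  define v where "v x = picard_iterate (Suc q) (scale x a)" for x
  have ray: "poly_curve scale (\<lambda>x. scale x a)" by (intro poly_curve_mult_var poly_curve_const)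
  have "poly_curve scale (\<lambda>x. v x - nonlinear_part (v x))"
    using poly_curve_poly_map[OF poly_map_id_minus_nonlinear_part
        vanishes_to_imp_poly_curve[OF vanishes_to_1_picard_iterate]]
    by (simp add: v_def)
  then have "vanishes_to scale (q + 3) (\<lambda>x. G (v x - nonlinear_part (v x)) - G (scale x a))"
    using picard_iterate_residual[of q a] by (intro vanishes_to_poly_map_diff[OF G _ ray]) (simp_all add: v_def)
  then have "vanishes_to scale (q + 3) (\<lambda>x. v x - G (scale x a))" by (simp add: GF)
  moreover have "vanishes_to scale (q + 3) (\<lambda>x. v x - yagzhev_series (q + 2) a x)"
    using picard_iterate_minus_yagzhev_series[of "Suc q" a] by (simp add: v_def eval_nat_numeral)
  ultimately show ?thesis using vanishes_to_diff by fastforce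
qed

lemma yagzhev_if_poly_automorphism:
  assumes "poly_automorphism scale (\<lambda>y. y - nonlinear_part y)"
  shows "\<exists>q0. \<forall>q\<ge>q0. \<forall>a. yagzhev_sum q a = 0"
proof -
  obtain G where G: "poly_map scale G" and GF: "\<And>y. G (y - nonlinear_part y) = y"
    using assms unfolding poly_automorphism_def by blast
  obtain d where d: "\<And>a. \<exists>c. \<forall>x. G (scale x a) = (\<Sum>l\<le>d. scale (x ^ l) (c l))"
    using poly_map_along_ray[OF G] by blast
  have "yagzhev_sum q a = 0" if "d < q" for q a
  proof -
    obtain c where c: "\<And>x. G (scale x a) = (\<Sum>l\<le>d. scale (x ^ l) (c l))" using d by blast
    have "yagzhev_series (q + 2) a x - G (scale x a) =
        (\<Sum>j\<le>q + 2. scale (x ^ j) (yagzhev_sum j a - (if j \<le> d then c j else 0)))" for x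
    proof -
      have "(\<Sum>l\<le>d. scale (x ^ l) (c l)) = (\<Sum>j\<le>q + 2. scale (x ^ j) (if j \<le> d then c j else 0))"
        by (rule sum.mono_neutral_cong_left) (use that in auto)
      then show ?thesis by (simp add: c yagzhev_series_def scale_right_diff_distrib sum_subtractf)
    qed
    then have "yagzhev_sum q a - (if q \<le> d then c q else 0) = 0"
      using yagzhev_series_approximates_left_inverse[OF G GF, of q a]
      by (intro vanishes_to_coeff_eq_0[where N = "q + 3" and n = "q + 2"]) simp_all
    with that show ?thesis by simp
  qed
  then show ?thesis by (intro exI[of _ "Suc d"]) auto
qed

end

theorem mainTheorem1:
  fixes scale :: "'k::field_char_0 \<Rightarrow> 'v::ab_group_add \<Rightarrow> 'v"
    and B :: "'v set"
    and m :: nat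
    and Psi :: "nat \<Rightarrow> 'v list \<Rightarrow> 'v"
  assumes "finite_dimensional_vector_space scale B"
    and "m \<ge> 2"
    and "\<forall>l\<in>{2..m}. multilinear scale l (Psi l) \<and> symmetric_map l (Psi l)"
  shows "poly_automorphism scale (\<lambda>x. x - (\<Sum>l=2..m. Psi l (replicate l x)))
         \<longleftrightarrow> (\<exists>q0. yagzhev_of_order m Psi q0)"
proof -
  interpret yagzhev_setup scale B m Psi
    by (intro yagzhev_setup.intro fin_dim_vector_space_char_0.intro yagzhev_setup_axioms.intro assms(1,2))
      (use assms(3) in auto)
  have "yagzhev_of_order m Psi q0 \<longleftrightarrow> (\<forall>q\<ge>q0. \<forall>a. yagzhev_sum q a = 0)" for q0
    by (simp add: yagzhev_of_order_def yagzhev_sum_def)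
  then show ?thesis
    using poly_automorphism_if_yagzhev yagzhev_if_poly_automorphism
    unfolding nonlinear_part_def by blast
qed

end
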